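(* Let $p \ge 2$ and $K \ge 0$ be coprime integers, and let $L, R$ be integers with $0 \le L \le R < p$. Define $G(p,K,L,R)$ recursively by taking the first of the following cases (checked in the order listed) whose condition holds: (a) if $K = 0$ or $L = 0$: $G(p,K,L,R) = 0$; (b) if $K \ge p$: $G(p,K,L,R) = G(p, K \bmod p, L, R)$; (c) if $\lceil L/K \rceil \le \lfloor R/K \rfloor$: $G(p,K,L,R) = \lceil L/K \rceil$; (d) if $2K \ge p$: $G(p,K,L,R) = G(p, p-K, p-R, p-L)$; (e) otherwise: $G(p,K,L,R) = \left\lceil \dfrac{L + p \cdot G\big(K,\ (-p) \bmod K,\ L \bmod K,\ R \bmod K\big)}{K} \right\rceil$. Then the recursion terminates after $O(\log p)$ recursive calls, and $G(p,K,L,R)$ is the smallest nonnegative integer $m$ such that $L \le (mK \bmod p) \le R$.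
   Context: For integers $a$ and $n \ge 1$, $a \bmod n$ denotes the unique representative of $a$ modulo $n$ in $\{0,1,\dots,n-1\}$. The condition "$L \le mK \le R \bmod p$" means that the least nonnegative residue of $mK$ modulo $p$ lies in the interval $[L,R]$. Since $\gcd(p,K)=1$, such an $m$ exists (e.g. $m \equiv L K^{-1} \pmod p$). *)

theory Defs
  imports Complex_Main
begin

(* Fuel-indexed rendering of the recursion G(p,K,L,R).
   Gf n p K L R = None  if the recursion does not finish within fuel n;
   otherwise Some (value, number of recursive calls made). *)
fun Gf :: "nat \<Rightarrow> int \<Rightarrow> int \<Rightarrow> int \<Rightarrow> int \<Rightarrow> (int \<times> nat) option" where
  "Gf 0 p K L R = None"
| "Gf (Suc n) p K L R =
     (if K = 0 \<or> L = 0 then Some (0, 0)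
      else if K \<ge> p then
        map_option (\<lambda>(g, c). (g, Suc c)) (Gf n p (K mod p) L R)
      else if \<lceil>real_of_int L / real_of_int K\<rceil> \<le> \<lfloor>real_of_int R / real_of_int K\<rfloor> then
        Some (\<lceil>real_of_int L / real_of_int K\<rceil>, 0)
      else if 2 * K \<ge> p then
        map_option (\<lambda>(g, c). (g, Suc c)) (Gf n p (p - K) (p - R) (p - L))
      else
        map_option (\<lambda>(g, c). (\<lceil>real_of_int (L + p * g) / real_of_int K\<rceil>, Suc c))
          (Gf n K ((- p) mod K) (L mod K) (R mod K)))"

end

(*
  Write m K = q p + t with t = (m K) mod p.  Unless the window [L, R] contains a multiple
  of K (case (c)), it lies strictly between two consecutive multiples of K, so t is in
  the window iff its residue t mod K = (-q p) mod K = q ((-p) mod K) mod K lies in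
  [L mod K, R mod K].  Since m grows with q, the least m comes from the least such q,
  which is the same problem for modulus K and multiplier (-p) mod K (case (e)); m is then
  recovered as the ceiling of (L + p q) / K.  Case (d) is the reflection t |-> p - t.
  After case (d) the multiplier is below p/2, and case (e) with K < p/2 passes to modulus
  K, so every two recursive calls at least halve the modulus; with 2^k < p <= 2^(k+1) this
  gives at most 2k + 3 calls, one of them for the initial reduction of K modulo p.
*)
theory Submission
  imports Defs
begin

definition least_in_window :: "int \<Rightarrow> int \<Rightarrow> int \<Rightarrow> int \<Rightarrow> int \<Rightarrow> bool" where
  "least_in_window p K L R g \<longleftrightarrow>
     0 \<le> g \<and> L \<le> (g * K) mod p \<and> (g * K) mod p \<le> R \<and>
     (\<forall>m. 0 \<le> m \<and> m < g \<longrightarrow> \<not> (L \<le> (m * K) mod p \<and> (m * K) mod p \<le> R))"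

lemma ceiling_divide_le_iff:
  fixes K L j :: int
  assumes "0 < K"
  shows "\<lceil>real_of_int L / real_of_int K\<rceil> \<le> j \<longleftrightarrow> L \<le> j * K"
proof -
  have "\<lceil>real_of_int L / real_of_int K\<rceil> \<le> j \<longleftrightarrow> real_of_int L \<le> real_of_int j * real_of_int K"
    using assms by (simp add: ceiling_le_iff pos_divide_le_eq)
  also have "\<dots> \<longleftrightarrow> L \<le> j * K"
    by (simp flip: of_int_mult)
  finally show ?thesis .
qed

lemma le_floor_divide_iff:
  fixes K R j :: int
  assumes "0 < K"
  shows "j \<le> \<lfloor>real_of_int R / real_of_int K\<rfloor> \<longleftrightarrow> j * K \<le> R"
proof -
  have "j \<le> \<lfloor>real_of_int R / real_of_int K\<rfloor> \<longleftrightarrow> real_of_int j * real_of_int K \<le> real_of_int R"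
    using assms by (simp add: le_floor_iff pos_le_divide_eq)
  also have "\<dots> \<longleftrightarrow> j * K \<le> R"
    by (simp flip: of_int_mult)
  finally show ?thesis .
qed

lemma ceiling_le_floor_divide_iff:
  fixes K L R :: int
  assumes "0 < K"
  shows "\<lceil>real_of_int L / real_of_int K\<rceil> \<le> \<lfloor>real_of_int R / real_of_int K\<rfloor> \<longleftrightarrow>
    (\<exists>j. L \<le> j * K \<and> j * K \<le> R)"
  using ceiling_divide_le_iff[OF assms] le_floor_divide_iff[OF assms] order_trans
  by (metis order_refl)

lemma two_le_if_ceiling_gt_floor:
  fixes K L R :: int
  assumes "0 < K" "L \<le> R"
    and "\<not> \<lceil>real_of_int L / real_of_int K\<rceil> \<le> \<lfloor>real_of_int R / real_of_int K\<rfloor>"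
  shows "2 \<le> K"
proof (rule ccontr)
  assume "\<not> 2 \<le> K"
  then have "K = 1"
    using assms(1) by simp
  then show False
    using assms ceiling_le_floor_divide_iff[OF assms(1), of L R] by auto
qed

lemma div_eq_if_no_multiple_between:
  fixes K L R :: int
  assumes "0 < K" "L \<le> R" and no_multiple: "\<forall>j. \<not> (L \<le> j * K \<and> j * K \<le> R)"
  shows "L div K = R div K"
proof -
  have "R div K * K \<le> R"
    using assms(1) by (simp add: minus_mod_eq_div_mult [symmetric])
  then have "R div K * K \<le> L"
    using no_multiple[rule_format, of "R div K"] by linarith
  then have "R div K \<le> L div K"
    using zdiv_mono1[OF _ assms(1)] assms(1) by fastforce
  moreover have "L div K \<le> R div K"
    using zdiv_mono1[OF assms(2,1)] .
  ultimately show ?thesis by simp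
qed

lemma mod_between_if_div_eq:
  fixes K L R t :: int
  assumes "0 < K" "L div K = R div K" "L \<le> t" "t \<le> R"
  shows "L mod K \<le> t mod K \<and> t mod K \<le> R mod K"
proof -
  have "t div K = L div K"
    using zdiv_mono1[OF assms(3,1)] zdiv_mono1[OF assms(4,1)] assms(2) by simp
  then show ?thesis
    using assms(2-4) by (simp flip: minus_div_mult_eq_mod)
qed

lemma least_in_window_zero:
  "0 \<le> R \<Longrightarrow> least_in_window p K 0 R 0"
  by (simp add: least_in_window_def)

lemma least_in_window_mod_multiplier:
  "least_in_window p (K mod p) L R g \<longleftrightarrow> least_in_window p K L R g"
  by (simp add: least_in_window_def mod_mult_right_eq)

lemma least_in_window_ceiling:
  fixes p K L R :: int
  assumes "0 < K" "0 \<le> L" "R < p"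
    and "\<lceil>real_of_int L / real_of_int K\<rceil> \<le> \<lfloor>real_of_int R / real_of_int K\<rfloor>"
  shows "least_in_window p K L R \<lceil>real_of_int L / real_of_int K\<rceil>"
proof -
  define g where "g = \<lceil>real_of_int L / real_of_int K\<rceil>"
  have "L \<le> g * K" "g * K \<le> R"
    using assms(4) ceiling_divide_le_iff[OF assms(1)] le_floor_divide_iff[OF assms(1)]
    unfolding g_def by auto
  moreover have "\<not> (L \<le> (m * K) mod p)" if "0 \<le> m" "m < g" for m
  proof -
    have "m * K < L"
      using that ceiling_divide_le_iff[OF assms(1), of L m] unfolding g_def by simp
    moreover have "0 \<le> m * K"
      using that assms(1) by simp
    ultimately have "(m * K) mod p = m * K"
      using assms(3) \<open>L \<le> g * K\<close> \<open>g * K \<le> R\<close> by (simp add: mod_pos_pos_trivial)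
    with \<open>m * K < L\<close> show ?thesis by simp
  qed
  moreover have "0 \<le> g"
    using \<open>L \<le> g * K\<close> assms(1,2) zero_le_mult_iff[of g K] by linarith
  ultimately show ?thesis
    using assms(1-3) unfolding least_in_window_def g_def [symmetric]
    by (auto simp: zero_le_mult_iff)
qed

lemma reflected_window_iff:
  fixes p K L R m :: int
  assumes "0 < L" "R < p"
  shows "p - R \<le> (m * (p - K)) mod p \<and> (m * (p - K)) mod p \<le> p - L \<longleftrightarrow>
    L \<le> (m * K) mod p \<and> (m * K) mod p \<le> R"
proof -
  have "(m * (p - K)) mod p = (- (m * K)) mod p"
    by (metis mod_mult_self1 add.commute diff_conv_add_uminus mult_minus_right right_diff_distrib')
  then have "(m * (p - K)) mod p = (if (m * K) mod p = 0 then 0 else p - (m * K) mod p)"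
    by (simp add: zmod_zminus1_eq_if)
  then show ?thesis
    using assms by auto
qed

lemma least_in_window_reflect:
  fixes p K L R g :: int
  assumes "0 < L" "R < p"
  shows "least_in_window p (p - K) (p - R) (p - L) g \<longleftrightarrow> least_in_window p K L R g"
  using reflected_window_iff[OF assms] unfolding least_in_window_def by blast

lemma residue_of_quotient_in_window:
  fixes K L R p m q t :: int
  assumes "0 < K" "L div K = R div K" "L \<le> t" "t \<le> R" "m * K = q * p + t"
  shows "L mod K \<le> (q * ((- p) mod K)) mod K \<and> (q * ((- p) mod K)) mod K \<le> R mod K"
proof -
  have "t = - (q * p) + m * K"
    using assms(5) by simp
  then have "t mod K = (- (q * p)) mod K"
    by (metis mod_mult_self1)
  also have "\<dots> = (q * ((- p) mod K)) mod K"
    by (metis mod_mult_right_eq mult_minus_right)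
  finally show ?thesis
    using mod_between_if_div_eq[OF assms(1-4)] by simp
qed

lemma ceiling_lift_mult_eq:
  fixes K L R p q :: int
  assumes K: "0 < K" and block: "L div K = R div K"
    and "L mod K \<le> (- (q * p)) mod K" "(- (q * p)) mod K \<le> R mod K"
  obtains t where "L \<le> t" "t \<le> R" "t < L + K"
    "\<lceil>real_of_int (L + p * q) / real_of_int K\<rceil> * K = t + q * p"
proof -
  define t where "t = L div K * K + (- (q * p)) mod K"
  have "L \<le> t" "t \<le> R"
    using assms(3,4) block unfolding t_def by (simp_all flip: minus_div_mult_eq_mod)
  moreover have "t < L + K"
    using div_mult_mod_eq[of L K] pos_mod_sign[OF K, of L] pos_mod_bound[OF K, of "- (q * p)"]
    unfolding t_def by linarith
  moreover have "t + q * p = L div K * K - (- (q * p) - (- (q * p)) mod K)"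
    unfolding t_def by simp
  moreover have "K dvd L div K * K - (- (q * p) - (- (q * p)) mod K)"
    by (intro dvd_diff dvd_triv_right dvd_minus_mod)
  ultimately obtain g where g: "g * K = t + q * p" "L \<le> t" "t \<le> R" "t < L + K"
    by (metis dvdE mult.commute)
  then have "L + p * q \<le> g * K" "\<not> L + p * q \<le> (g - 1) * K"
    by (simp_all add: mult.commute right_diff_distrib)
  then have "\<lceil>real_of_int (L + p * q) / real_of_int K\<rceil> = g"
    using ceiling_divide_le_iff[OF K, of "L + p * q" g] ceiling_divide_le_iff[OF K, of "L + p * q" "g - 1"]
    by linarith
  then show thesis
    using that g by simp
qed

lemma least_in_window_lift:
  fixes p K L R q :: int
  assumes K: "0 < K" and L: "0 \<le> L" "L \<le> R" "R < p"
    and no_multiple: "\<forall>j. \<not> (L \<le> j * K \<and> j * K \<le> R)"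
    and q: "least_in_window K ((- p) mod K) (L mod K) (R mod K) q"
  shows "least_in_window p K L R \<lceil>real_of_int (L + p * q) / real_of_int K\<rceil>"
proof -
  define g where "g = \<lceil>real_of_int (L + p * q) / real_of_int K\<rceil>"
  have block: "L div K = R div K"
    using div_eq_if_no_multiple_between[OF K L(2) no_multiple] .
  have residue: "(x * ((- p) mod K)) mod K = (- (x * p)) mod K" for x
    by (metis mod_mult_right_eq mult_minus_right)
  have q0: "0 \<le> q" and "L mod K \<le> (- (q * p)) mod K" "(- (q * p)) mod K \<le> R mod K"
    and q_least: "\<And>q'. 0 \<le> q' \<Longrightarrow> q' < q \<Longrightarrow>
      \<not> (L mod K \<le> (q' * ((- p) mod K)) mod K \<and> (q' * ((- p) mod K)) mod K \<le> R mod K)"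
    using q residue[of q] unfolding least_in_window_def by auto
  then obtain t where t: "L \<le> t" "t \<le> R" "t < L + K" and g: "g * K = t + q * p"
    using ceiling_lift_mult_eq[OF K block] unfolding g_def by blast
  have g_mod: "(g * K) mod p = t"
    using g t L by (simp add: mod_pos_pos_trivial)
  have "0 \<le> q * p"
    using q0 L by simp
  then have g0: "0 \<le> g"
    using g t L K zero_le_mult_iff[of g K] by linarith
  have g_least: "g \<le> m" if "0 \<le> m" "L \<le> (m * K) mod p" "(m * K) mod p \<le> R" for m
  proof -
    define q' where "q' = (m * K) div p"
    have m_split: "m * K = q' * p + (m * K) mod p"
      unfolding q'_def by simp
    have "0 \<le> q'"
      unfolding q'_def using that(1) K L by (simp add: pos_imp_zdiv_nonneg_iff)
    moreover have "L mod K \<le> (q' * ((- p) mod K)) mod K \<and> (q' * ((- p) mod K)) mod K \<le> R mod K"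
      using residue_of_quotient_in_window[OF K block that(2,3) m_split] .
    ultimately have "q \<le> q'"
      using q_least by fastforce
    then have "q * p \<le> q' * p"
      using L by (simp add: mult_right_mono)
    moreover have "(m + 1) * K = m * K + K"
      by (simp add: distrib_right)
    ultimately have "g * K < (m + 1) * K"
      using g t m_split that(2) by linarith
    then show ?thesis
      using K by (simp add: mult_less_cancel_right)
  qed
  show ?thesis
    using g0 g_mod t g_least unfolding least_in_window_def g_def [symmetric] by (meson not_less)
qed

lemma coprime_diff_self_right:
  fixes p K :: "'a :: ring_gcd"
  assumes "coprime p K"
  shows "coprime p (p - K)"
proof (rule coprimeI)
  fix d
  assume "d dvd p" "d dvd p - K"
  then have "d dvd K"
    using dvd_diff[of d p "p - K"] by simp
  then show "is_unit d"
    using coprime_common_divisor[OF assms \<open>d dvd p\<close>] by blast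
qed

lemma double_complement_less:
  fixes p K :: int
  assumes "coprime p K" "2 \<le> K" "p \<le> 2 * K"
  shows "2 * (p - K) < p"
proof -
  have "\<not> K dvd p"
  proof
    assume "K dvd p"
    then have "K dvd 1"
      using coprime_common_divisor[OF assms(1) _ dvd_refl] by simp
    then show False
      using assms(2) zdvd_imp_le[of K 1] by linarith
  qed
  then have "p \<noteq> 2 * K"
    by (metis dvd_triv_right)
  then show ?thesis
    using assms(3) by (simp add: right_diff_distrib)
qed

definition Gf_solves :: "int \<Rightarrow> int \<Rightarrow> int \<Rightarrow> int \<Rightarrow> nat \<Rightarrow> bool" where
  "Gf_solves p K L R c \<longleftrightarrow>
     (\<exists>n g c'. Gf n p K L R = Some (g, c') \<and> c' \<le> c \<and> least_in_window p K L R g)"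

lemma Gf_solves_Suc: "Gf_solves p K L R c \<Longrightarrow> Gf_solves p K L R (Suc c)"
  unfolding Gf_solves_def using le_SucI by blast

lemma Gf_solves_zero_window:
  assumes "0 \<le> R"
  shows "Gf_solves p K 0 R c"
proof -
  have "Gf (Suc 0) p K 0 R = Some (0, 0)"
    by simp
  then show ?thesis
    using least_in_window_zero[OF assms] unfolding Gf_solves_def by blast
qed

lemma Gf_solves_direct:
  fixes p K L R :: int
  assumes "0 < K" "K < p" "0 < L" "R < p"
    and "\<lceil>real_of_int L / real_of_int K\<rceil> \<le> \<lfloor>real_of_int R / real_of_int K\<rfloor>"
  shows "Gf_solves p K L R c"
proof -
  have "Gf (Suc 0) p K L R = Some (\<lceil>real_of_int L / real_of_int K\<rceil>, 0)"
    using assms by simp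
  then show ?thesis
    using least_in_window_ceiling[of K L R p] assms unfolding Gf_solves_def by fastforce
qed

lemma Gf_solves_mod:
  assumes "p \<le> K" "K \<noteq> 0" "L \<noteq> 0" and "Gf_solves p (K mod p) L R c"
  shows "Gf_solves p K L R (Suc c)"
proof -
  obtain n g c' where "Gf n p (K mod p) L R = Some (g, c')" "c' \<le> c"
    and "least_in_window p (K mod p) L R g"
    using assms(4) unfolding Gf_solves_def by blast
  moreover from this(1) have "Gf (Suc n) p K L R = Some (g, Suc c')"
    using assms(1-3) by simp
  ultimately show ?thesis
    unfolding Gf_solves_def least_in_window_mod_multiplier by fastforce
qed

lemma Gf_solves_reflect:
  fixes p K L R :: int
  assumes "0 < K" "K < p" "0 < L" "R < p" "p \<le> 2 * K"
    and "\<not> \<lceil>real_of_int L / real_of_int K\<rceil> \<le> \<lfloor>real_of_int R / real_of_int K\<rfloor>"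
    and "Gf_solves p (p - K) (p - R) (p - L) c"
  shows "Gf_solves p K L R (Suc c)"
proof -
  obtain n g c' where "Gf n p (p - K) (p - R) (p - L) = Some (g, c')" "c' \<le> c"
    and "least_in_window p (p - K) (p - R) (p - L) g"
    using assms(7) unfolding Gf_solves_def by blast
  moreover from this(1) have "Gf (Suc n) p K L R = Some (g, Suc c')"
    using assms(1-6) by simp
  ultimately show ?thesis
    unfolding Gf_solves_def using least_in_window_reflect[OF assms(3,4)] by fastforce
qed

lemma Gf_solves_lift:
  fixes p K L R :: int
  assumes "0 < K" "2 * K < p" "0 < L" "L \<le> R" "R < p"
    and no_multiple: "\<not> \<lceil>real_of_int L / real_of_int K\<rceil> \<le> \<lfloor>real_of_int R / real_of_int K\<rfloor>"
    and "Gf_solves K ((- p) mod K) (L mod K) (R mod K) c"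
  shows "Gf_solves p K L R (Suc c)"
proof -
  obtain n q c' where "Gf n K ((- p) mod K) (L mod K) (R mod K) = Some (q, c')" "c' \<le> c"
    and q: "least_in_window K ((- p) mod K) (L mod K) (R mod K) q"
    using assms(7) unfolding Gf_solves_def by blast
  moreover from this(1)
  have "Gf (Suc n) p K L R = Some (\<lceil>real_of_int (L + p * q) / real_of_int K\<rceil>, Suc c')"
    using assms(1-6) by simp
  moreover have "least_in_window p K L R \<lceil>real_of_int (L + p * q) / real_of_int K\<rceil>"
    using least_in_window_lift[OF assms(1) _ assms(4,5) _ q] assms(3) no_multiple
      ceiling_le_floor_divide_iff[OF assms(1)] by simp
  ultimately show ?thesis
    unfolding Gf_solves_def by fastforce
qed

lemma Gf_solves_of_small_multiplier:
  fixes p K L R :: int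
  assumes small: "\<And>K L R. 0 \<le> K \<Longrightarrow> 2 * K < p \<Longrightarrow> coprime p K \<Longrightarrow>
      0 \<le> L \<Longrightarrow> L \<le> R \<Longrightarrow> R < p \<Longrightarrow> Gf_solves p K L R c"
    and "2 \<le> p" "0 \<le> K" "K < p" "coprime p K" "0 \<le> L" "L \<le> R" "R < p"
  shows "Gf_solves p K L R (Suc c)"
proof -
  have K: "0 < K"
    using assms(2,3,5) by (cases "K = 0") auto
  consider "2 * K < p" | "L = 0"
    | "0 < L" "\<lceil>real_of_int L / real_of_int K\<rceil> \<le> \<lfloor>real_of_int R / real_of_int K\<rfloor>"
    | "p \<le> 2 * K" "0 < L" "\<not> \<lceil>real_of_int L / real_of_int K\<rceil> \<le> \<lfloor>real_of_int R / real_of_int K\<rfloor>"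
    using assms(6) by linarith
  then show ?thesis
  proof cases
    case 1
    then show ?thesis
      using small assms(3-8) Gf_solves_Suc by blast
  next
    case 2
    then show ?thesis
      using Gf_solves_zero_window assms(6,7) by simp
  next
    case 3
    then show ?thesis
      using Gf_solves_direct K assms(4,8) by blast
  next
    case 4
    have "2 \<le> K"
      using two_le_if_ceiling_gt_floor[OF K assms(7) 4(3)] .
    then have "2 * (p - K) < p"
      using double_complement_less assms(5) 4(1) by blast
    moreover have "coprime p (p - K)"
      using coprime_diff_self_right[OF assms(5)] .
    ultimately have "Gf_solves p (p - K) (p - R) (p - L) c"
      using small[of "p - K" "p - R" "p - L"] 4 assms(4,7,8) by simp
    then show ?thesis
      using Gf_solves_reflect K assms(4,8) 4 by blast
  qed
qed

lemma Gf_solves_small_multiplier: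
  fixes p K L R :: int
  assumes "2 \<le> p" "p \<le> 2 ^ Suc k" "0 \<le> K" "2 * K < p" "coprime p K" "0 \<le> L" "L \<le> R" "R < p"
  shows "Gf_solves p K L R (2 * k + 1)"
  using assms
proof (induction k arbitrary: p K L R)
  case 0
  have "0 < K"
    using "0.prems"(1,3,5) by (cases "K = 0") auto
  moreover have "p \<le> 2"
    using "0.prems"(2) by simp
  ultimately show ?case
    using "0.prems"(4) by linarith
next
  case (Suc k)
  have K: "0 < K"
    using Suc.prems(1,3,5) by (cases "K = 0") auto
  consider "L = 0"
    | "0 < L" "\<lceil>real_of_int L / real_of_int K\<rceil> \<le> \<lfloor>real_of_int R / real_of_int K\<rfloor>"
    | "0 < L" "\<not> \<lceil>real_of_int L / real_of_int K\<rceil> \<le> \<lfloor>real_of_int R / real_of_int K\<rfloor>"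
    using Suc.prems(6) by linarith
  then show ?case
  proof cases
    case 1
    then show ?thesis
      using Gf_solves_zero_window Suc.prems(6,7) by simp
  next
    case 2
    then show ?thesis
      using Gf_solves_direct K Suc.prems(4,8) by simp
  next
    case 3
    have "2 \<le> K"
      using two_le_if_ceiling_gt_floor[OF K Suc.prems(7) 3(2)] .
    moreover have "K \<le> 2 ^ Suc k"
      using Suc.prems(2,4) by simp
    moreover have "coprime K ((- p) mod K)"
      using Suc.prems(5) K by (simp add: coprime_commute)
    moreover have "L mod K \<le> R mod K"
      using mod_between_if_div_eq[OF K _ Suc.prems(7) order_refl] div_eq_if_no_multiple_between[OF K Suc.prems(7)]
        3(2) ceiling_le_floor_divide_iff[OF K] by simp
    ultimately have "Gf_solves K ((- p) mod K) (L mod K) (R mod K) (Suc (2 * k + 1))"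
      using Gf_solves_of_small_multiplier[OF Suc.IH] K by simp
    then show ?thesis
      using Gf_solves_lift[OF K Suc.prems(4) 3(1) Suc.prems(7,8) 3(2)] by simp
  qed
qed

lemma Gf_solves_bounded:
  fixes p K L R :: int
  assumes "2 \<le> p" "p \<le> 2 ^ Suc k" "0 \<le> K" "coprime p K" "0 \<le> L" "L \<le> R" "R < p"
  shows "Gf_solves p K L R (2 * k + 3)"
proof -
  have reduced: "Gf_solves p (K mod p) L R (Suc (2 * k + 1))"
    using Gf_solves_of_small_multiplier[OF Gf_solves_small_multiplier[OF assms(1,2)]] assms by simp
  have "K \<noteq> 0"
    using assms(1,4) by (cases "K = 0") auto
  consider "L = 0" | "K < p" | "p \<le> K" "L \<noteq> 0"
    by linarith
  then show ?thesis
  proof cases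
    case 1
    then show ?thesis
      using Gf_solves_zero_window assms(5,6) by simp
  next
    case 2
    then show ?thesis
      using Gf_solves_Suc[OF reduced] assms(3) by (simp add: mod_pos_pos_trivial numeral_3_eq_3)
  next
    case 3
    then show ?thesis
      using Gf_solves_mod[OF 3(1) \<open>K \<noteq> 0\<close> 3(2) reduced] by (simp add: numeral_3_eq_3)
  qed
qed

lemma ex_power_of_two_bracket:
  fixes p :: int
  assumes "2 \<le> p"
  obtains k where "2 ^ k < p" "p \<le> 2 ^ Suc k"
proof -
  have "\<exists>k. 2 ^ k \<le> nat p - 1 \<and> nat p - 1 < (2::nat) ^ (k + 1)"
    by (rule ex_power_ivl1) (use assms in auto)
  then obtain k where lower: "2 ^ k \<le> nat p - 1" and upper: "nat p - 1 < (2::nat) ^ Suc k"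
    by auto
  have "2 \<le> nat p"
    using assms by simp
  then have "(2::nat) ^ k < nat p" "nat p \<le> 2 ^ Suc k"
    using lower upper by linarith+
  then have "int (2 ^ k) < int (nat p)" "int (nat p) \<le> int (2 ^ Suc k)"
    by (simp_all only: of_nat_less_iff of_nat_le_iff)
  then show thesis
    using that assms by simp
qed

lemma linear_le_log_of_power_less:
  fixes x :: real
  assumes "2 ^ k < x" "2 \<le> x"
  shows "real (2 * k + 3) \<le> 5 * log 2 x"
proof -
  have "real k < log 2 x"
    using less_log_of_power[OF assms(1)] by simp
  moreover have "1 \<le> log 2 x"
    using le_log_of_power[of 2 1 x] assms(2) by simp
  ultimately show ?thesis
    by simp
qed

theorem mainTheorem1:
  "\<exists>C::real. \<forall>p K L R :: int.
     p \<ge> 2 \<and> K \<ge> 0 \<and> coprime p K \<and> 0 \<le> L \<and> L \<le> R \<and> R < p \<longrightarrow>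
     (\<exists>n g c. Gf n p K L R = Some (g, c)
        \<and> real c \<le> C * ln (real_of_int p)
        \<and> 0 \<le> g \<and> L \<le> (g * K) mod p \<and> (g * K) mod p \<le> R
        \<and> (\<forall>m. 0 \<le> m \<and> m < g \<longrightarrow> \<not> (L \<le> (m * K) mod p \<and> (m * K) mod p \<le> R)))"
proof (intro exI[of _ "5 / ln 2"] allI impI)
  fix p K L R :: int
  assume A: "p \<ge> 2 \<and> K \<ge> 0 \<and> coprime p K \<and> 0 \<le> L \<and> L \<le> R \<and> R < p"
  then obtain k where k: "2 ^ k < p" "p \<le> 2 ^ Suc k"
    using ex_power_of_two_bracket by blast
  then have "Gf_solves p K L R (2 * k + 3)"
    using Gf_solves_bounded A by blast
  moreover have "real (2 * k + 3) \<le> 5 / ln 2 * ln (real_of_int p)"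
    using linear_le_log_of_power_less[of k "real_of_int p"] k(1) A
    by (simp add: log_def of_int_less_iff [symmetric])
  ultimately show "\<exists>n g c. Gf n p K L R = Some (g, c)
        \<and> real c \<le> 5 / ln 2 * ln (real_of_int p)
        \<and> 0 \<le> g \<and> L \<le> (g * K) mod p \<and> (g * K) mod p \<le> R
        \<and> (\<forall>m. 0 \<le> m \<and> m < g \<longrightarrow> \<not> (L \<le> (m * K) mod p \<and> (m * K) mod p \<le> R))"
    unfolding Gf_solves_def least_in_window_def by (meson of_nat_le_iff order_trans)
qed

end
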